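(* The map $\zeta\mapsto z(\zeta)=h_E(\zeta)+ih_N(\zeta)-h_W(\zeta)-ih_S(\zeta)$ is an orientation-preserving diffeomorphism from the unit disc $\mathbb D$ onto $\diamondsuit=\{x+iy:|x|+|y|<1\}$.
   Context: $\gamma_E=(e^{-i\pi/4},e^{i\pi/4})$, $\gamma_N=(e^{i\pi/4},e^{3i\pi/4})$, $\gamma_W=(e^{3i\pi/4},e^{5i\pi/4})$, $\gamma_S=(e^{5i\pi/4},e^{7i\pi/4})$ are the four counterclockwise boundary arcs of the unit disc $\mathbb D$, and $h_E,h_N,h_W,h_S$ are their harmonic measures in $\mathbb D$: for $\alpha<\beta<\alpha+2\pi$, $\mathrm{hm}_{\mathbb D}(\zeta;(e^{i\alpha},e^{i\beta}))=\tfrac1\pi\big(\arg(e^{i\beta}-\zeta)-\arg(e^{i\alpha}-\zeta)\big)-\tfrac1{2\pi}(\beta-\alpha)$. *)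

theory Defs
  imports "HOL-Analysis.Analysis"
begin

text \<open>Harmonic measure in the unit disc of the arc from cis alpha counterclockwise to
  cis beta (with alpha < beta < alpha + 2 pi).  The difference
  arg(cis beta - z) - arg(cis alpha - z) (continuous branch) is the counterclockwise angle
  from cis alpha - z to cis beta - z, which lies in (0, 2 pi) for z in the disc; it is
  Arg2pi of the quotient.\<close>
definition hm_disc :: "complex \<Rightarrow> real \<Rightarrow> real \<Rightarrow> real" where
  "hm_disc z \<alpha> \<beta> =
     (1 / pi) * Arg2pi ((cis \<beta> - z) / (cis \<alpha> - z)) - (\<beta> - \<alpha>) / (2 * pi)"

definition h_E :: "complex \<Rightarrow> real" where "h_E z = hm_disc z (- pi/4) (pi/4)"
definition h_N :: "complex \<Rightarrow> real" where "h_N z = hm_disc z (pi/4) (3*pi/4)"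
definition h_W :: "complex \<Rightarrow> real" where "h_W z = hm_disc z (3*pi/4) (5*pi/4)"
definition h_S :: "complex \<Rightarrow> real" where "h_S z = hm_disc z (5*pi/4) (7*pi/4)"

definition zmap :: "complex \<Rightarrow> complex" where
  "zmap \<zeta> = of_real (h_E \<zeta>) + \<i> * of_real (h_N \<zeta>) - of_real (h_W \<zeta>) - \<i> * of_real (h_S \<zeta>)"

definition diamond :: "complex set" where
  "diamond = {w. \<bar>Re w\<bar> + \<bar>Im w\<bar> < 1}"

definition dir_deriv :: "complex \<Rightarrow> (complex \<Rightarrow> complex) \<Rightarrow> complex \<Rightarrow> complex" where
  "dir_deriv v f x = vector_derivative (\<lambda>t::real. f (x + of_real t * v)) (at 0)"

definition smooth_on :: "complex set \<Rightarrow> (complex \<Rightarrow> complex) \<Rightarrow> bool" where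
  "smooth_on S f \<longleftrightarrow> open S \<and>
     (\<forall>ds :: complex list. continuous_on S (foldr dir_deriv ds f) \<and>
        (\<forall>x\<in>S. foldr dir_deriv ds f differentiable (at x)))"

definition jac_det :: "(complex \<Rightarrow> complex) \<Rightarrow> real" where
  "jac_det L = Re (L 1) * Im (L \<i>) - Im (L 1) * Re (L \<i>)"

definition orientation_preserving_diffeo ::
  "(complex \<Rightarrow> complex) \<Rightarrow> complex set \<Rightarrow> complex set \<Rightarrow> bool" where
  "orientation_preserving_diffeo f S T \<longleftrightarrow>
     bij_betw f S T \<and> smooth_on S f \<and> smooth_on T (inv_into S f) \<and>
     (\<forall>x\<in>S. jac_det (frechet_derivative f (at x)) > 0)"

end

theory Submission
  imports Defs
begin

(*
  For |z| < 1 each harmonic measure of a quarter arc has the closed form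
  1/2 - arctan (K -/+ 2 p) / pi with K = (1 + |z|^2) / (1 - |z|^2) and p + i q = sqrt 2 z / (1 - |z|^2),
  and by the identity arctan (K + 2p) - arctan (K - 2p) = arctan (p + q) + arctan (p - q), valid
  because K^2 = 1 + 2p^2 + 2q^2, the map factors as
    z  |->  u = sqrt 2 z / (1 - |z|^2)  |->  ((a + b) / pi, (a - b) / pi),   a = arctan (u1 + u2), b = arctan (u1 - u2).
  The first factor maps the disc diffeomorphically onto the plane, the second maps the plane onto the
  diamond with inverse built from tan; both have positive Jacobian. Smoothness of the map and of its
  inverse follows because all their components are built from Re and Im by field operations, sqrt,
  arctan and tan, a class of functions closed under partial differentiation.
*)

section \<open>Smooth real functions on a plane domain\<close>

text \<open>An inductively generated class of real functions on \<open>S\<close>, closed under partial differentiation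
  (\<open>smooth_real_on_has_derivative\<close>), which is how smoothness is certified. Sine and cosine are
  included only so that the derivatives of cosine and tangent stay in the class.\<close>

inductive smooth_real_on :: "complex set \<Rightarrow> (complex \<Rightarrow> real) \<Rightarrow> bool" for S where
  smooth_real_on_const: "smooth_real_on S (\<lambda>z. c)"
| smooth_real_on_Re: "smooth_real_on S Re"
| smooth_real_on_Im: "smooth_real_on S Im"
| smooth_real_on_add: "smooth_real_on S f \<Longrightarrow> smooth_real_on S g \<Longrightarrow> smooth_real_on S (\<lambda>z. f z + g z)"
| smooth_real_on_mult: "smooth_real_on S f \<Longrightarrow> smooth_real_on S g \<Longrightarrow> smooth_real_on S (\<lambda>z. f z * g z)"
| smooth_real_on_inverse:
    "smooth_real_on S f \<Longrightarrow> (\<forall>z\<in>S. f z \<noteq> 0) \<Longrightarrow> smooth_real_on S (\<lambda>z. inverse (f z))"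
| smooth_real_on_arctan: "smooth_real_on S f \<Longrightarrow> smooth_real_on S (\<lambda>z. arctan (f z))"
| smooth_real_on_sin: "smooth_real_on S f \<Longrightarrow> smooth_real_on S (\<lambda>z. sin (f z))"
| smooth_real_on_cos: "smooth_real_on S f \<Longrightarrow> smooth_real_on S (\<lambda>z. cos (f z))"
| smooth_real_on_tan:
    "smooth_real_on S f \<Longrightarrow> (\<forall>z\<in>S. cos (f z) \<noteq> 0) \<Longrightarrow> smooth_real_on S (\<lambda>z. tan (f z))"
| smooth_real_on_sqrt:
    "smooth_real_on S f \<Longrightarrow> (\<forall>z\<in>S. f z > 0) \<Longrightarrow> smooth_real_on S (\<lambda>z. sqrt (f z))"
| smooth_real_on_cong: "smooth_real_on S f \<Longrightarrow> (\<forall>z\<in>S. f z = g z) \<Longrightarrow> smooth_real_on S g"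

lemma smooth_real_on_minus: "smooth_real_on S f \<Longrightarrow> smooth_real_on S (\<lambda>z. - f z)"
  by (rule smooth_real_on_cong[OF smooth_real_on_mult[OF smooth_real_on_const[of S "-1"]]]) auto

lemma smooth_real_on_diff:
  assumes "smooth_real_on S f" "smooth_real_on S g"
  shows "smooth_real_on S (\<lambda>z. f z - g z)"
proof -
  have "smooth_real_on S (\<lambda>z. f z + - g z)"
    using assms by (intro smooth_real_on_add smooth_real_on_minus)
  then show ?thesis by (rule smooth_real_on_cong) simp
qed

lemma smooth_real_on_divide:
  "smooth_real_on S f \<Longrightarrow> smooth_real_on S g \<Longrightarrow> \<forall>z\<in>S. g z \<noteq> 0 \<Longrightarrow>
    smooth_real_on S (\<lambda>z. f z / g z)"
  by (rule smooth_real_on_cong[OF smooth_real_on_mult[OF _ smooth_real_on_inverse]])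
     (auto simp: divide_inverse)

lemma smooth_real_on_power2: "smooth_real_on S f \<Longrightarrow> smooth_real_on S (\<lambda>z. (f z)\<^sup>2)"
  by (rule smooth_real_on_cong[OF smooth_real_on_mult]) (auto simp: power2_eq_square)

lemmas smooth_real_on_intros =
  smooth_real_on_const smooth_real_on_Re smooth_real_on_Im smooth_real_on_add smooth_real_on_mult
  smooth_real_on_inverse smooth_real_on_arctan smooth_real_on_sin smooth_real_on_cos
  smooth_real_on_tan smooth_real_on_sqrt smooth_real_on_minus smooth_real_on_diff
  smooth_real_on_divide smooth_real_on_power2

lemma smooth_real_on_compose:
  assumes "smooth_real_on T f" and "smooth_real_on S (\<lambda>z. Re (g z))" "smooth_real_on S (\<lambda>z. Im (g z))"
    and "g ` S \<subseteq> T"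
  shows "smooth_real_on S (\<lambda>z. f (g z))"
  using assms(1)
proof induction
  case (smooth_real_on_cong f h)
  then show ?case using assms(4) by (auto elim!: smooth_real_on.smooth_real_on_cong)
qed (use assms in \<open>auto intro!: smooth_real_on_intros\<close>)

lemma smooth_real_on_chain:
  assumes "\<forall>x\<in>S. (f has_derivative F x) (at x)" "\<forall>v. smooth_real_on S (\<lambda>x. F x v)"
    and "\<forall>x\<in>S. (g has_real_derivative g' (f x)) (at (f x))"
    and "smooth_real_on S (\<lambda>x. g' (f x))"
  shows "\<exists>G. (\<forall>x\<in>S. ((\<lambda>z. g (f z)) has_derivative G x) (at x)) \<and> (\<forall>v. smooth_real_on S (\<lambda>x. G x v))"
  using assms
  by (intro exI[of _ "\<lambda>x v. F x v * g' (f x)"])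
     (auto intro: DERIV_compose_FDERIV smooth_real_on_mult)

lemma smooth_real_on_has_derivative:
  assumes S: "open S" and "smooth_real_on S f"
  shows "\<exists>F. (\<forall>x\<in>S. (f has_derivative F x) (at x)) \<and> (\<forall>v. smooth_real_on S (\<lambda>x. F x v))"
  using assms(2)
proof induction
  case (smooth_real_on_const c)
  show ?case by (rule exI[of _ "\<lambda>x v. 0"]) (auto intro: smooth_real_on_intros)
next
  case smooth_real_on_Re
  show ?case by (rule exI[of _ "\<lambda>x v. Re v"]) (auto intro: smooth_real_on_intros derivative_intros)
next
  case smooth_real_on_Im
  show ?case by (rule exI[of _ "\<lambda>x v. Im v"]) (auto intro: smooth_real_on_intros derivative_intros)
next
  case (smooth_real_on_add f g)
  then obtain F G where "\<forall>x\<in>S. (f has_derivative F x) (at x)" "\<forall>v. smooth_real_on S (\<lambda>x. F x v)"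
    "\<forall>x\<in>S. (g has_derivative G x) (at x)" "\<forall>v. smooth_real_on S (\<lambda>x. G x v)" by blast
  then show ?case
    by (intro exI[of _ "\<lambda>x v. F x v + G x v"]) (auto intro: smooth_real_on_intros has_derivative_add)
next
  case (smooth_real_on_mult f g)
  then obtain F G where "\<forall>x\<in>S. (f has_derivative F x) (at x)" "\<forall>v. smooth_real_on S (\<lambda>x. F x v)"
    "\<forall>x\<in>S. (g has_derivative G x) (at x)" "\<forall>v. smooth_real_on S (\<lambda>x. G x v)" by blast
  then show ?case using smooth_real_on_mult.hyps
    by (intro exI[of _ "\<lambda>x v. f x * G x v + F x v * g x"])
       (auto intro!: smooth_real_on_intros has_derivative_mult)
next
  case (smooth_real_on_inverse f)
  have "(inverse has_real_derivative - (inverse y * inverse y)) (at y)" if "y \<noteq> 0" for y :: real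
    using DERIV_inverse[OF that] by (simp add: power2_eq_square)
  with smooth_real_on_inverse show ?case
    by (elim exE conjE smooth_real_on_chain[where g'="\<lambda>y. - (inverse y * inverse y)"])
       (auto intro!: smooth_real_on_intros)
next
  case (smooth_real_on_arctan f)
  have "1 + (f x)\<^sup>2 \<noteq> 0" for x
    using zero_le_power2[of "f x"] by linarith
  with smooth_real_on_arctan show ?case
    by (elim exE conjE smooth_real_on_chain[where g'="\<lambda>y. inverse (1 + y\<^sup>2)"])
       (auto intro!: DERIV_arctan smooth_real_on_intros)
next
  case (smooth_real_on_sin f)
  then show ?case
    by (elim exE conjE smooth_real_on_chain[where g'=cos]) (auto intro!: smooth_real_on_intros)
next
  case (smooth_real_on_cos f)
  then show ?case
    by (elim exE conjE smooth_real_on_chain[where g'="\<lambda>y. - sin y"])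
       (auto intro!: DERIV_cos smooth_real_on_intros)
next
  case (smooth_real_on_tan f)
  then show ?case
    by (elim exE conjE smooth_real_on_chain[where g'="\<lambda>y. inverse ((cos y)\<^sup>2)"])
       (auto intro!: DERIV_tan smooth_real_on_intros)
next
  case (smooth_real_on_sqrt f)
  then show ?case
    by (elim exE conjE smooth_real_on_chain[where g'="\<lambda>y. inverse (sqrt y) / 2"])
       (auto intro!: DERIV_real_sqrt smooth_real_on_intros)
next
  case (smooth_real_on_cong f g)
  then obtain F where "\<forall>x\<in>S. (f has_derivative F x) (at x)" "\<forall>v. smooth_real_on S (\<lambda>x. F x v)"
    by blast
  with smooth_real_on_cong.hyps show ?case
    by (auto intro: has_derivative_transform_within_open[OF _ S])
qed

lemma has_derivative_Complex:
  assumes "(f has_derivative F) (at x)" "(g has_derivative G) (at x)"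
  shows "((\<lambda>z. Complex (f z) (g z)) has_derivative (\<lambda>v. Complex (F v) (G v))) (at x)"
proof -
  have "((\<lambda>z. of_real (f z) + \<i> * of_real (g z)) has_derivative
        (\<lambda>v. of_real (F v) + \<i> * of_real (G v))) (at x)"
    by (intro derivative_intros assms)
  then show ?thesis by (simp add: Complex_eq)
qed

lemma smooth_real_on_components_has_derivative:
  assumes S: "open S"
    and "smooth_real_on S (\<lambda>z. Re (h z))" "smooth_real_on S (\<lambda>z. Im (h z))"
  shows "\<exists>L. (\<forall>x\<in>S. (h has_derivative L x) (at x)) \<and>
             (\<forall>v. smooth_real_on S (\<lambda>x. Re (L x v)) \<and> smooth_real_on S (\<lambda>x. Im (L x v)))"
proof -
  obtain F where F: "\<forall>x\<in>S. ((\<lambda>z. Re (h z)) has_derivative F x) (at x)"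
      "\<forall>v. smooth_real_on S (\<lambda>x. F x v)"
    using smooth_real_on_has_derivative[OF S assms(2)] by blast
  obtain G where G: "\<forall>x\<in>S. ((\<lambda>z. Im (h z)) has_derivative G x) (at x)"
      "\<forall>v. smooth_real_on S (\<lambda>x. G x v)"
    using smooth_real_on_has_derivative[OF S assms(3)] by blast
  have "(h has_derivative (\<lambda>v. Complex (F x v) (G x v))) (at x)" if "x \<in> S" for x
    using has_derivative_Complex[of "\<lambda>z. Re (h z)" "F x" x "\<lambda>z. Im (h z)" "G x"] F G that
    by simp
  with F(2) G(2) show ?thesis
    by (intro exI[of _ "\<lambda>x v. Complex (F x v) (G x v)"]) simp
qed

lemma dir_deriv_eq_has_derivative:
  assumes S: "open S" and x: "x \<in> S" and h: "(h has_derivative L) (at x)"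
    and eq: "\<forall>y\<in>S. k y = h y"
  shows "dir_deriv v k x = L v"
proof -
  define l where "l = (\<lambda>t::real. x + of_real t * v)"
  have "(l has_derivative (\<lambda>t. t *\<^sub>R v)) (at 0)"
    unfolding l_def by (auto intro!: derivative_eq_intros simp: scaleR_conv_of_real)
  moreover have "(h has_derivative L) (at (l 0))"
    using h by (simp add: l_def)
  ultimately have "((h \<circ> l) has_derivative L \<circ> (\<lambda>t. t *\<^sub>R v)) (at 0)"
    by (rule diff_chain_at)
  moreover have "L \<circ> (\<lambda>t. t *\<^sub>R v) = (\<lambda>t. t *\<^sub>R L v)"
    using linear_scale[OF has_derivative_linear[OF h]] by (simp add: o_def)
  ultimately have "((h \<circ> l) has_vector_derivative L v) (at 0)"
    by (simp add: has_vector_derivative_def)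
  moreover have "open (l -` S)"
    unfolding l_def by (intro continuous_open_vimage S continuous_intros)
  moreover have "0 \<in> l -` S" "\<And>t. t \<in> l -` S \<Longrightarrow> (h \<circ> l) t = k (x + of_real t * v)"
    using x eq by (simp_all add: l_def)
  ultimately have "((\<lambda>t. k (x + of_real t * v)) has_vector_derivative L v) (at 0)"
    by (rule has_vector_derivative_transform_within_open)
  then show ?thesis unfolding dir_deriv_def by (rule vector_derivative_at)
qed

lemma smooth_on_if_smooth_real_components:
  assumes S: "open S"
    and "smooth_real_on S (\<lambda>z. Re (h z))" "smooth_real_on S (\<lambda>z. Im (h z))"
  shows "smooth_on S h"
proof -
  have iterated: "\<exists>g. smooth_real_on S (\<lambda>z. Re (g z)) \<and> smooth_real_on S (\<lambda>z. Im (g z)) \<and>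
                   (\<forall>x\<in>S. foldr dir_deriv ds h x = g x)" for ds
  proof (induction ds)
    case Nil
    then show ?case using assms(2,3) by auto
  next
    case (Cons v ds)
    then obtain g where g: "smooth_real_on S (\<lambda>z. Re (g z))" "smooth_real_on S (\<lambda>z. Im (g z))"
      "\<forall>x\<in>S. foldr dir_deriv ds h x = g x" by blast
    obtain L where "\<forall>x\<in>S. (g has_derivative L x) (at x)"
      "\<forall>v. smooth_real_on S (\<lambda>x. Re (L x v)) \<and> smooth_real_on S (\<lambda>x. Im (L x v))"
      using smooth_real_on_components_has_derivative[OF S g(1,2)] by blast
    with g(3) show ?case
      by (intro exI[of _ "\<lambda>x. L x v"]) (auto intro: dir_deriv_eq_has_derivative[OF S])
  qed
  have "continuous_on S (foldr dir_deriv ds h) \<and> (\<forall>x\<in>S. foldr dir_deriv ds h differentiable (at x))"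
    for ds
  proof -
    obtain g where g: "smooth_real_on S (\<lambda>z. Re (g z))" "smooth_real_on S (\<lambda>z. Im (g z))"
      "\<forall>x\<in>S. foldr dir_deriv ds h x = g x" using iterated by blast
    obtain L where L: "\<forall>x\<in>S. (g has_derivative L x) (at x)"
      "\<forall>v. smooth_real_on S (\<lambda>x. Re (L x v)) \<and> smooth_real_on S (\<lambda>x. Im (L x v))"
      using smooth_real_on_components_has_derivative[OF S g(1,2)] by blast
    have "(foldr dir_deriv ds h has_derivative L x) (at x)" if "x \<in> S" for x
      using L that g(3) by (auto intro: has_derivative_transform_within_open[OF _ S that])
    then show ?thesis
      by (meson continuous_at_imp_continuous_on differentiableI has_derivative_continuous)
  qed
  with S show ?thesis unfolding smooth_on_def by blast
qed

section \<open>Harmonic measures of the quarter arcs\<close>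

lemma cis_3pi4_minus_arctan:
  fixes N D :: real
  assumes D: "D > 0"
  shows "of_real (sqrt 2 * sqrt (D\<^sup>2 + N\<^sup>2)) * cis (3*pi/4 - arctan (N / D)) = Complex (N - D) (N + D)"
proof -
  define M where "M = sqrt (D\<^sup>2 + N\<^sup>2)"
  have M: "M > 0" using D unfolding M_def by (simp add: add_pos_nonneg)
  have "sqrt (1 + (N / D)\<^sup>2) = M / D"
    using D by (simp add: M_def power_divide real_sqrt_divide field_simps)
  then have cos_arctan: "cos (arctan (N / D)) = D / M" and sin_arctan: "sin (arctan (N / D)) = N / M"
    using D by (simp_all add: cos_arctan sin_arctan)
  have "cos (3*pi/4) = - sqrt 2 / 2" "sin (3*pi/4) = sqrt 2 / 2"
    using cos_add[of "pi/2" "pi/4"] sin_add[of "pi/2" "pi/4"] by (simp_all add: cos_45 sin_45)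
  then have "cos (3*pi/4 - arctan (N / D)) = sqrt 2 * (N - D) / (2 * M)"
    and "sin (3*pi/4 - arctan (N / D)) = sqrt 2 * (N + D) / (2 * M)"
    unfolding cos_diff sin_diff cos_arctan sin_arctan using M by (simp_all add: field_simps)
  moreover have sqrt2: "sqrt 2 * (sqrt 2 * a) = 2 * a" for a :: real
    by (simp flip: mult.assoc)
  ultimately show ?thesis
    unfolding M_def[symmetric] using M by (simp add: complex_eq_iff cis.ctr sqrt2)
qed

lemma Arg2pi_quarter_arc:
  fixes t :: complex
  assumes t: "norm t < 1"
  shows "Arg2pi ((\<i> - t) / (1 - t)) =
    3*pi/4 - arctan ((1 + (norm t)\<^sup>2 - 2 * (Re t + Im t)) / (1 - (norm t)\<^sup>2))"
proof -
  define x y where "x = Re t" and "y = Im t"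
  define N D where "N = 1 + x\<^sup>2 + y\<^sup>2 - 2 * (x + y)" and "D = 1 - x\<^sup>2 - y\<^sup>2"
  define Q where "Q = (1 - x)\<^sup>2 + y\<^sup>2"
  have norm_t: "(norm t)\<^sup>2 = x\<^sup>2 + y\<^sup>2" by (simp add: x_def y_def cmod_power2)
  moreover have "(norm t)\<^sup>2 < 1" using t by (simp add: power_less_one_iff)
  ultimately have xy: "x\<^sup>2 + y\<^sup>2 < 1" by simp
  then have D: "D > 0" by (simp add: D_def)
  have "x\<^sup>2 < 1" using xy zero_le_power2[of y] by linarith
  then have "x < 1" by (simp add: abs_square_less_1)
  then have Q: "Q > 0" by (simp add: Q_def add_pos_nonneg)
  have "Re ((\<i> - t) / (1 - t)) = (N - D) / (2 * Q)" "Im ((\<i> - t) / (1 - t)) = (N + D) / (2 * Q)"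
    unfolding Re_divide Im_divide using Q
    by (simp_all add: x_def y_def N_def D_def Q_def field_simps power2_eq_square)
  then have "(\<i> - t) / (1 - t) = of_real (1 / (2 * Q)) * Complex (N - D) (N + D)"
    by (simp add: complex_eq_iff)
  also have "\<dots> = of_real (sqrt 2 * sqrt (D\<^sup>2 + N\<^sup>2) / (2 * Q)) * exp (\<i> * of_real (3*pi/4 - arctan (N / D)))"
    unfolding cis_3pi4_minus_arctan[OF D, symmetric] by (simp add: cis_conv_exp)
  finally have polar: "(\<i> - t) / (1 - t) =
      of_real (sqrt 2 * sqrt (D\<^sup>2 + N\<^sup>2) / (2 * Q)) * exp (\<i> * of_real (3*pi/4 - arctan (N / D)))" .
  have "Arg2pi ((\<i> - t) / (1 - t)) = 3*pi/4 - arctan (N / D)"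
    using D Q arctan_bounded[of "N / D"]
    by (intro Arg2pi_unique[OF polar[symmetric]]) (auto simp: add_pos_nonneg)
  then show ?thesis by (simp add: norm_t N_def D_def x_def y_def algebra_simps)
qed

lemma hm_disc_rotate: "hm_disc z (\<alpha> + \<theta>) (\<beta> + \<theta>) = hm_disc (cis (- \<theta>) * z) \<alpha> \<beta>"
proof -
  have "(cis (\<beta> + \<theta>) - z) / (cis (\<alpha> + \<theta>) - z) =
        (cis (- \<theta>) * (cis (\<beta> + \<theta>) - z)) / (cis (- \<theta>) * (cis (\<alpha> + \<theta>) - z))"
    by simp
  also have "\<dots> = (cis \<beta> - cis (- \<theta>) * z) / (cis \<alpha> - cis (- \<theta>) * z)"
    by (simp add: right_diff_distrib cis_mult)
  finally show ?thesis by (simp add: hm_disc_def)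
qed

lemma h_E_eq:
  assumes "norm z < 1"
  shows "h_E z = 1/2 - arctan ((1 + (norm z)\<^sup>2 - 2 * sqrt 2 * Re z) / (1 - (norm z)\<^sup>2)) / pi"
proof -
  define t where "t = cis (pi/4) * z"
  define a where "a = arctan ((1 + (norm z)\<^sup>2 - 2 * sqrt 2 * Re z) / (1 - (norm z)\<^sup>2))"
  have "norm t = norm z" by (simp add: t_def norm_mult)
  moreover have "Re t + Im t = sqrt 2 * Re z"
    by (simp add: t_def cis.ctr cos_45 sin_45 algebra_simps)
  ultimately have Arg: "Arg2pi ((\<i> - t) / (1 - t)) = 3*pi/4 - a"
    using Arg2pi_quarter_arc[of t] assms by (simp add: a_def mult.assoc)
  have "h_E z = hm_disc t 0 (pi/2)"
    using hm_disc_rotate[of z 0 "- (pi/4)" "pi/2"] by (simp add: h_E_def t_def)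
  also have "\<dots> = (3*pi/4 - a) / pi - 1/4"
    by (simp add: hm_disc_def Arg)
  also have "\<dots> = 1/2 - a / pi"
    by (simp add: field_simps)
  finally show ?thesis by (simp add: a_def)
qed

lemma h_N_eq_h_E: "h_N z = h_E (- \<i> * z)"
  using hm_disc_rotate[of z "- (pi/4)" "pi/2" "pi/4"] by (simp add: h_N_def h_E_def add.commute)

lemma h_W_eq_h_E: "h_W z = h_E (- z)"
proof -
  have "cis (- pi) = -1" by (simp add: complex_eq_iff)
  then show ?thesis
    using hm_disc_rotate[of z "- (pi/4)" pi "pi/4"] by (simp add: h_W_def h_E_def add.commute)
qed

lemma h_S_eq_h_E: "h_S z = h_E (\<i> * z)"
proof -
  have "cis (- (3*pi/2)) = \<i>"
    using cos_add[of pi "pi/2"] sin_add[of pi "pi/2"] by (simp add: complex_eq_iff)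
  then show ?thesis
    using hm_disc_rotate[of z "- (pi/4)" "3*pi/2" "pi/4"] by (simp add: h_S_def h_E_def add.commute)
qed

section \<open>Factorisation of the map\<close>

definition stretch :: "complex \<Rightarrow> complex" where
  "stretch z = (sqrt 2 / (1 - (norm z)\<^sup>2)) *\<^sub>R z"

lemma stretch_unit_mult:
  assumes "norm c = 1"
  shows "stretch (c * z) = c * stretch z"
  using assms by (simp add: stretch_def norm_mult scaleR_conv_of_real)

lemma norm_stretch_power2:
  "(norm (stretch z))\<^sup>2 = 2 * (norm z)\<^sup>2 / (1 - (norm z)\<^sup>2)\<^sup>2"
  by (simp add: stretch_def power_mult_distrib power_divide)

lemma one_plus_norm_stretch_power2:
  assumes "norm z < 1"
  shows "1 + 2 * (norm (stretch z))\<^sup>2 = ((1 + (norm z)\<^sup>2) / (1 - (norm z)\<^sup>2))\<^sup>2"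
proof -
  define n where "n = (norm z)\<^sup>2"
  have "n < 1" using assms by (simp add: n_def power_less_one_iff)
  then show ?thesis
    by (simp add: norm_stretch_power2 n_def[symmetric] power_divide field_simps)
       (simp add: power2_eq_square algebra_simps)
qed

lemma h_E_eq_stretch:
  assumes "norm z < 1"
  shows "h_E z = 1/2 - arctan ((1 + (norm z)\<^sup>2) / (1 - (norm z)\<^sup>2) - 2 * Re (stretch z)) / pi"
proof -
  have "(1 + (norm z)\<^sup>2 - 2 * sqrt 2 * Re z) / (1 - (norm z)\<^sup>2) =
        (1 + (norm z)\<^sup>2) / (1 - (norm z)\<^sup>2) - 2 * Re (stretch z)"
    by (simp add: stretch_def diff_divide_distrib)
  then show ?thesis using h_E_eq[OF assms] by simp
qed

lemma arctan_diff_eq_arctan_add: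
  fixes K p q :: real
  assumes K: "K\<^sup>2 = 1 + 2 * p\<^sup>2 + 2 * q\<^sup>2"
  shows "arctan (K + 2 * p) - arctan (K - 2 * p) = arctan (p + q) + arctan (p - q)"
proof -
  have arctan_Arg: "arctan s = Arg (Complex 1 s)" for s
    using arg_conv_arctan[of "Complex 1 s"] by simp
  have Arg_mult: "Arg (Complex 1 s * Complex 1 r) = Arg (Complex 1 s) + Arg (Complex 1 r)" for s r
    using Arg_Re_pos[of "Complex 1 s"] Arg_Re_pos[of "Complex 1 r"]
    by (intro Arg_times) (auto simp: complex_eq_iff)
  have "arctan (K + 2 * p) - arctan (K - 2 * p) = arctan (K + 2 * p) + arctan (2 * p - K)"
    by (simp flip: arctan_minus)
  also have "\<dots> = Arg (Complex 1 (K + 2 * p) * Complex 1 (2 * p - K))"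
    by (simp add: arctan_Arg Arg_mult)
  also have "Complex 1 (K + 2 * p) * Complex 1 (2 * p - K) =
             of_real 2 * (Complex 1 (p + q) * Complex 1 (p - q))"
    using K by (simp add: complex_eq_iff power2_eq_square algebra_simps)
  also have "Arg \<dots> = Arg (Complex 1 (p + q) * Complex 1 (p - q))"
    by (rule Arg_times_of_real) simp
  also have "\<dots> = arctan (p + q) + arctan (p - q)"
    by (simp add: arctan_Arg Arg_mult)
  finally show ?thesis .
qed

definition arctan_diamond :: "complex \<Rightarrow> complex" where
  "arctan_diamond u = Complex ((arctan (Re u + Im u) + arctan (Re u - Im u)) / pi)
                              ((arctan (Re u + Im u) - arctan (Re u - Im u)) / pi)"

lemma zmap_eq_arctan_diamond_stretch:
  assumes z: "norm z < 1"
  shows "zmap z = arctan_diamond (stretch z)"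
proof -
  define K where "K = (1 + (norm z)\<^sup>2) / (1 - (norm z)\<^sup>2)"
  define p q where "p = Re (stretch z)" and "q = Im (stretch z)"
  have "K\<^sup>2 = 1 + 2 * (norm (stretch z))\<^sup>2"
    using one_plus_norm_stretch_power2[OF z] by (simp add: K_def)
  then have K_pq: "K\<^sup>2 = 1 + 2 * p\<^sup>2 + 2 * q\<^sup>2" and K_qp: "K\<^sup>2 = 1 + 2 * q\<^sup>2 + 2 * p\<^sup>2"
    by (simp_all add: p_def q_def cmod_power2)
  have "h_E z = 1/2 - arctan (K - 2 * p) / pi"
    using h_E_eq_stretch[OF z] by (simp add: K_def p_def)
  moreover have "h_W z = 1/2 - arctan (K + 2 * p) / pi"
    using h_E_eq_stretch[of "- z"] z stretch_unit_mult[of "-1" z]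
    by (simp add: h_W_eq_h_E K_def p_def)
  moreover have "h_N z = 1/2 - arctan (K - 2 * q) / pi"
    using h_E_eq_stretch[of "- \<i> * z"] z stretch_unit_mult[of "- \<i>" z]
    by (simp add: h_N_eq_h_E K_def q_def norm_mult)
  moreover have "h_S z = 1/2 - arctan (K + 2 * q) / pi"
    using h_E_eq_stretch[of "\<i> * z"] z stretch_unit_mult[of "\<i>" z]
    by (simp add: h_S_eq_h_E K_def q_def norm_mult)
  ultimately have "Re (zmap z) = (arctan (K + 2 * p) - arctan (K - 2 * p)) / pi"
    and "Im (zmap z) = (arctan (K + 2 * q) - arctan (K - 2 * q)) / pi"
    by (simp_all add: zmap_def diff_divide_distrib)
  with arctan_diff_eq_arctan_add[OF K_pq] arctan_diff_eq_arctan_add[OF K_qp]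
  show ?thesis
    by (simp add: complex_eq_iff arctan_diamond_def p_def q_def add.commute arctan_minus[symmetric])
qed

definition unstretch :: "complex \<Rightarrow> complex" where
  "unstretch u = (sqrt 2 / (1 + sqrt (1 + 2 * (norm u)\<^sup>2))) *\<^sub>R u"

lemma norm_unstretch_less_1: "norm (unstretch u) < 1"
proof -
  define m where "m = sqrt (1 + 2 * (norm u)\<^sup>2)"
  have "sqrt 2 * norm u = sqrt (2 * (norm u)\<^sup>2)"
    by (simp add: real_sqrt_mult)
  also have "\<dots> \<le> m"
    unfolding m_def by (rule real_sqrt_le_mono) simp
  finally have "sqrt 2 * norm u < 1 + m" by simp
  moreover have "m \<ge> 0" by (simp add: m_def)
  ultimately show ?thesis
    by (simp add: unstretch_def m_def[symmetric] field_simps)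
qed

lemma stretch_unstretch: "stretch (unstretch u) = u"
proof -
  define m where "m = sqrt (1 + 2 * (norm u)\<^sup>2)"
  define c where "c = sqrt 2 / (1 + m)"
  have m: "m \<ge> 1" and m2: "m\<^sup>2 = 1 + 2 * (norm u)\<^sup>2"
    by (simp_all add: m_def)
  have "(norm (unstretch u))\<^sup>2 = 2 * (norm u)\<^sup>2 / (1 + m)\<^sup>2"
    by (simp add: unstretch_def m_def[symmetric] power_mult_distrib power_divide)
  also have "\<dots> = (m\<^sup>2 - 1) / (1 + m)\<^sup>2"
    by (simp add: m2)
  also have "\<dots> = ((m - 1) * (m + 1)) / ((m + 1) * (m + 1))"
    by (simp add: power2_eq_square algebra_simps)
  also have "\<dots> = (m - 1) / (m + 1)"
    using m by simp
  finally have "1 - (norm (unstretch u))\<^sup>2 = 2 / (m + 1)"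
    using m by (simp add: field_simps)
  then have "stretch (unstretch u) = (sqrt 2 / (2 / (m + 1))) *\<^sub>R unstretch u"
    by (simp only: stretch_def)
  also have "\<dots> = (sqrt 2 / (2 / (m + 1)) * c) *\<^sub>R u"
    by (simp add: unstretch_def m_def[symmetric] c_def)
  also have "sqrt 2 / (2 / (m + 1)) * c = 1"
    using m by (simp add: c_def field_simps)
  finally show ?thesis by simp
qed

lemma unstretch_stretch:
  assumes "norm z < 1"
  shows "unstretch (stretch z) = z"
proof -
  define n where "n = (norm z)\<^sup>2"
  have n: "0 \<le> n" "n < 1" using assms by (simp_all add: n_def power_less_one_iff)
  then have "sqrt (1 + 2 * (norm (stretch z))\<^sup>2) = (1 + n) / (1 - n)"
    using one_plus_norm_stretch_power2[OF assms] by (simp add: n_def)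
  then have "sqrt 2 / (1 + sqrt (1 + 2 * (norm (stretch z))\<^sup>2)) * (sqrt 2 / (1 - n)) = 1"
    using n by (simp add: field_simps)
  then show ?thesis
    by (simp add: unstretch_def stretch_def n_def)
qed

definition tan_diamond :: "complex \<Rightarrow> complex" where
  "tan_diamond w = Complex ((tan (pi * (Re w + Im w) / 2) + tan (pi * (Re w - Im w) / 2)) / 2)
                           ((tan (pi * (Re w + Im w) / 2) - tan (pi * (Re w - Im w) / 2)) / 2)"

lemma arctan_diamond_in_diamond: "arctan_diamond u \<in> diamond"
proof -
  define a b where "a = arctan (Re u + Im u)" and "b = arctan (Re u - Im u)"
  have "\<bar>a\<bar> < pi/2" "\<bar>b\<bar> < pi/2"
    using arctan_bounded unfolding a_def b_def abs_less_iff by (metis minus_less_iff)+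
  then have "\<bar>a + b\<bar> / pi + \<bar>a - b\<bar> / pi < 1"
    by (simp add: field_simps)
  then show ?thesis
    by (simp add: diamond_def arctan_diamond_def a_def[symmetric] b_def[symmetric])
qed

lemma tan_diamond_arctan_diamond: "tan_diamond (arctan_diamond u) = u"
proof -
  have "pi * (Re (arctan_diamond u) + Im (arctan_diamond u)) / 2 = arctan (Re u + Im u)"
    "pi * (Re (arctan_diamond u) - Im (arctan_diamond u)) / 2 = arctan (Re u - Im u)"
    by (simp_all add: arctan_diamond_def field_simps)
  then show ?thesis
    by (simp add: tan_diamond_def tan_arctan complex_eq_iff field_simps)
qed

lemma diamond_arctan_bounds:
  assumes "w \<in> diamond"
  shows "\<bar>pi * (Re w + Im w) / 2\<bar> < pi/2" "\<bar>pi * (Re w - Im w) / 2\<bar> < pi/2"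
proof -
  have "\<bar>Re w + Im w\<bar> < 1" "\<bar>Re w - Im w\<bar> < 1"
    using assms by (auto simp: diamond_def)
  then show "\<bar>pi * (Re w + Im w) / 2\<bar> < pi/2" "\<bar>pi * (Re w - Im w) / 2\<bar> < pi/2"
    by (simp_all add: abs_mult)
qed

lemma arctan_diamond_tan_diamond:
  assumes "w \<in> diamond"
  shows "arctan_diamond (tan_diamond w) = w"
proof -
  have "Re (tan_diamond w) + Im (tan_diamond w) = tan (pi * (Re w + Im w) / 2)"
    "Re (tan_diamond w) - Im (tan_diamond w) = tan (pi * (Re w - Im w) / 2)"
    by (simp_all add: tan_diamond_def field_simps)
  then have "arctan (Re (tan_diamond w) + Im (tan_diamond w)) = pi * (Re w + Im w) / 2"
    "arctan (Re (tan_diamond w) - Im (tan_diamond w)) = pi * (Re w - Im w) / 2"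
    using diamond_arctan_bounds[OF assms] by (simp_all add: arctan_tan abs_less_iff)
  then show ?thesis
    by (simp add: arctan_diamond_def complex_eq_iff field_simps)
qed

lemma bij_betw_zmap: "bij_betw zmap (ball 0 1) diamond"
proof (rule bij_betw_byWitness[where f' = "\<lambda>w. unstretch (tan_diamond w)"])
  show "\<forall>z\<in>ball 0 1. unstretch (tan_diamond (zmap z)) = z"
    by (simp add: zmap_eq_arctan_diamond_stretch tan_diamond_arctan_diamond unstretch_stretch)
  show "\<forall>w\<in>diamond. zmap (unstretch (tan_diamond w)) = w"
    by (simp add: zmap_eq_arctan_diamond_stretch norm_unstretch_less_1 stretch_unstretch arctan_diamond_tan_diamond)
  show "zmap ` ball 0 1 \<subseteq> diamond"
    by (auto simp: zmap_eq_arctan_diamond_stretch arctan_diamond_in_diamond)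
  show "(\<lambda>w. unstretch (tan_diamond w)) ` diamond \<subseteq> ball 0 1"
    by (auto simp: norm_unstretch_less_1)
qed

lemma inv_into_zmap:
  assumes "w \<in> diamond"
  shows "inv_into (ball 0 1) zmap w = unstretch (tan_diamond w)"
  using assms bij_betw_zmap norm_unstretch_less_1
  by (intro inv_into_f_eq)
     (auto simp: bij_betw_def zmap_eq_arctan_diamond_stretch stretch_unstretch arctan_diamond_tan_diamond)

section \<open>Positivity of the Jacobian\<close>

lemma jac_det_compose:
  assumes "linear L" "linear M"
  shows "jac_det (L \<circ> M) = jac_det L * jac_det M"
proof -
  have L: "L v = of_real (Re v) * L 1 + of_real (Im v) * L \<i>" for v
  proof -
    have "v = Re v *\<^sub>R 1 + Im v *\<^sub>R \<i>" by (simp add: complex_eq_iff)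
    then have "L v = L (Re v *\<^sub>R 1 + Im v *\<^sub>R \<i>)" by (rule arg_cong)
    also have "\<dots> = Re v *\<^sub>R L 1 + Im v *\<^sub>R L \<i>"
      using assms(1) by (simp add: linear_add linear_scale)
    finally show ?thesis by (simp add: scaleR_conv_of_real)
  qed
  show ?thesis unfolding jac_det_def o_def L[of "M 1"] L[of "M \<i>"]
    by (simp add: algebra_simps)
qed

lemma jac_det_Complex_linear:
  "jac_det (\<lambda>h. Complex (a * Re h + b * Im h) (c * Re h + d * Im h)) = a * d - b * c"
  by (simp add: jac_det_def)

lemma Re_stretch: "Re (stretch z) = sqrt 2 * Re z / (1 - (Re z)\<^sup>2 - (Im z)\<^sup>2)"
  and Im_stretch: "Im (stretch z) = sqrt 2 * Im z / (1 - (Re z)\<^sup>2 - (Im z)\<^sup>2)"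
  by (simp_all add: stretch_def cmod_power2 diff_diff_add)

lemma Re_Im_power2_sum_less_1:
  assumes "norm z < 1"
  shows "(Re z)\<^sup>2 + (Im z)\<^sup>2 < 1"
  using assms by (simp add: cmod_power2[symmetric] power_less_one_iff)

lemma has_derivative_stretch:
  assumes "norm z < 1" and X_def: "X = Re z" and Y_def: "Y = Im z" and D_def: "D = 1 - X\<^sup>2 - Y\<^sup>2"
  shows "(stretch has_derivative (\<lambda>h.
            Complex (sqrt 2 * (D + 2 * X\<^sup>2) / D\<^sup>2 * Re h + sqrt 2 * (2 * X * Y) / D\<^sup>2 * Im h)
                    (sqrt 2 * (2 * X * Y) / D\<^sup>2 * Re h + sqrt 2 * (D + 2 * Y\<^sup>2) / D\<^sup>2 * Im h))) (at z)"
proof -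
  have D: "D \<noteq> 0"
    using Re_Im_power2_sum_less_1[OF assms(1)] by (simp add: D_def X_def Y_def)
  have "((\<lambda>z. sqrt 2 * Re z / (1 - (Re z)\<^sup>2 - (Im z)\<^sup>2)) has_derivative
         (\<lambda>h. (sqrt 2 * Re h * D - sqrt 2 * X * (- (2 * Re h * X) - 2 * Im h * Y)) / (D * D))) (at z)"
    "((\<lambda>z. sqrt 2 * Im z / (1 - (Re z)\<^sup>2 - (Im z)\<^sup>2)) has_derivative
         (\<lambda>h. (sqrt 2 * Im h * D - sqrt 2 * Y * (- (2 * Re h * X) - 2 * Im h * Y)) / (D * D))) (at z)"
    using D unfolding D_def X_def Y_def by (auto intro!: derivative_eq_intros)
  then have "((\<lambda>z. Complex (Re (stretch z)) (Im (stretch z))) has_derivative (\<lambda>h.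
     Complex ((sqrt 2 * Re h * D - sqrt 2 * X * (- (2 * Re h * X) - 2 * Im h * Y)) / (D * D))
             ((sqrt 2 * Im h * D - sqrt 2 * Y * (- (2 * Re h * X) - 2 * Im h * Y)) / (D * D)))) (at z)"
    unfolding Re_stretch Im_stretch by (rule has_derivative_Complex)
  then show ?thesis
    using D by (simp add: field_simps power2_eq_square)
qed

lemma jac_det_stretch_pos:
  assumes "norm z < 1"
  shows "jac_det (frechet_derivative stretch (at z)) > 0"
proof -
  define X Y where "X = Re z" and "Y = Im z"
  define D where "D = 1 - X\<^sup>2 - Y\<^sup>2"
  have D: "D > 0"
    using Re_Im_power2_sum_less_1[OF assms] by (simp add: D_def X_def Y_def)
  have "jac_det (frechet_derivative stretch (at z)) =
        sqrt 2 * (D + 2 * X\<^sup>2) / D\<^sup>2 * (sqrt 2 * (D + 2 * Y\<^sup>2) / D\<^sup>2) -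
        sqrt 2 * (2 * X * Y) / D\<^sup>2 * (sqrt 2 * (2 * X * Y) / D\<^sup>2)"
    unfolding frechet_derivative_at[OF has_derivative_stretch[OF assms X_def Y_def D_def], symmetric]
    by (rule jac_det_Complex_linear)
  also have "\<dots> = 2 * (D\<^sup>2 + 2 * D * (X\<^sup>2 + Y\<^sup>2)) / D\<^sup>2 ^ 2"
    using D by (simp add: field_simps power2_eq_square)
  also have "\<dots> > 0"
    using D by (intro divide_pos_pos mult_pos_pos add_pos_nonneg) auto
  finally show ?thesis .
qed

lemma has_derivative_arctan_diamond:
  assumes \<alpha>_def: "\<alpha> = inverse (1 + (Re u + Im u)\<^sup>2)" and \<beta>_def: "\<beta> = inverse (1 + (Re u - Im u)\<^sup>2)"
  shows "(arctan_diamond has_derivative (\<lambda>h.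
            Complex ((\<alpha> + \<beta>) / pi * Re h + (\<alpha> - \<beta>) / pi * Im h)
                    ((\<alpha> - \<beta>) / pi * Re h + (\<alpha> + \<beta>) / pi * Im h))) (at u)"
proof -
  have "((\<lambda>w. arctan (Re w + Im w)) has_derivative (\<lambda>h. (Re h + Im h) * \<alpha>)) (at u)"
    "((\<lambda>w. arctan (Re w - Im w)) has_derivative (\<lambda>h. (Re h - Im h) * \<beta>)) (at u)"
    unfolding \<alpha>_def \<beta>_def
    by (auto intro!: DERIV_compose_FDERIV[OF DERIV_arctan] derivative_intros)
  then have "(arctan_diamond has_derivative (\<lambda>h.
     Complex (((Re h + Im h) * \<alpha> + (Re h - Im h) * \<beta>) / pi)
             (((Re h + Im h) * \<alpha> - (Re h - Im h) * \<beta>) / pi))) (at u)"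
    unfolding arctan_diamond_def[abs_def]
    by (intro has_derivative_Complex bounded_linear.has_derivative[OF bounded_linear_divide]
        has_derivative_add has_derivative_diff)
  then show ?thesis
    by (rule has_derivative_eq_rhs) (simp add: fun_eq_iff complex_eq_iff field_simps)
qed

lemma jac_det_arctan_diamond_pos: "jac_det (frechet_derivative arctan_diamond (at u)) > 0"
proof -
  define \<alpha> \<beta> where "\<alpha> = inverse (1 + (Re u + Im u)\<^sup>2)" and "\<beta> = inverse (1 + (Re u - Im u)\<^sup>2)"
  have "\<alpha> > 0" "\<beta> > 0" by (simp_all add: \<alpha>_def \<beta>_def add_pos_nonneg)
  have "jac_det (frechet_derivative arctan_diamond (at u)) =
        (\<alpha> + \<beta>) / pi * ((\<alpha> + \<beta>) / pi) - (\<alpha> - \<beta>) / pi * ((\<alpha> - \<beta>) / pi)"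
    unfolding frechet_derivative_at[OF has_derivative_arctan_diamond[OF \<alpha>_def \<beta>_def], symmetric]
    by (rule jac_det_Complex_linear)
  also have "\<dots> = 4 * \<alpha> * \<beta> / pi\<^sup>2"
    by (simp add: field_simps power2_eq_square)
  also have "\<dots> > 0"
    using \<open>\<alpha> > 0\<close> \<open>\<beta> > 0\<close> by simp
  finally show ?thesis .
qed

lemma jac_det_zmap_pos:
  assumes z: "norm z < 1"
  shows "jac_det (frechet_derivative zmap (at z)) > 0"
proof -
  define S A where "S = frechet_derivative stretch (at z)"
    and "A = frechet_derivative arctan_diamond (at (stretch z))"
  have S: "(stretch has_derivative S) (at z)"
    unfolding S_def frechet_derivative_works[symmetric]
    using has_derivative_stretch[OF z refl refl refl] by (rule differentiableI)
  have A: "(arctan_diamond has_derivative A) (at (stretch z))"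
    unfolding A_def frechet_derivative_works[symmetric]
    using has_derivative_arctan_diamond[OF refl refl] by (rule differentiableI)
  have "((\<lambda>z. arctan_diamond (stretch z)) has_derivative A \<circ> S) (at z)"
    using diff_chain_at[OF S A] by (simp add: o_def)
  then have "(zmap has_derivative A \<circ> S) (at z)"
    by (rule has_derivative_transform_within_open[where s = "ball 0 1"])
       (use z zmap_eq_arctan_diamond_stretch in auto)
  then have "jac_det (frechet_derivative zmap (at z)) = jac_det A * jac_det S"
    by (simp add: frechet_derivative_at[symmetric] jac_det_compose
        has_derivative_linear[OF A] has_derivative_linear[OF S])
  with jac_det_arctan_diamond_pos jac_det_stretch_pos[OF z] show ?thesis
    by (simp add: A_def S_def)
qed

section \<open>Smoothness\<close>

lemma smooth_real_on_stretch:
  "smooth_real_on (ball 0 1) (\<lambda>z. Re (stretch z))" "smooth_real_on (ball 0 1) (\<lambda>z. Im (stretch z))"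
proof -
  have "\<forall>z\<in>ball 0 1. 1 - (Re z)\<^sup>2 - (Im z)\<^sup>2 \<noteq> 0"
    using Re_Im_power2_sum_less_1 by force
  then show "smooth_real_on (ball 0 1) (\<lambda>z. Re (stretch z))" "smooth_real_on (ball 0 1) (\<lambda>z. Im (stretch z))"
    unfolding Re_stretch Im_stretch by (auto intro!: smooth_real_on_intros)
qed

lemma smooth_real_on_unstretch:
  "smooth_real_on UNIV (\<lambda>u. Re (unstretch u))" "smooth_real_on UNIV (\<lambda>u. Im (unstretch u))"
proof -
  have "0 < 1 + sqrt (1 + 2 * ((Re u)\<^sup>2 + (Im u)\<^sup>2))" for u
    by (intro add_pos_nonneg) auto
  then have scaled: "smooth_real_on UNIV (\<lambda>u. sqrt 2 / (1 + sqrt (1 + 2 * ((Re u)\<^sup>2 + (Im u)\<^sup>2))) * f u)"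
    if "smooth_real_on UNIV f" for f
    using that by (intro smooth_real_on_intros) (auto simp: add_pos_nonneg less_imp_neq[symmetric])
  from scaled[OF smooth_real_on_Re] show "smooth_real_on UNIV (\<lambda>u. Re (unstretch u))"
    by (rule smooth_real_on_cong) (simp add: unstretch_def cmod_power2)
  from scaled[OF smooth_real_on_Im] show "smooth_real_on UNIV (\<lambda>u. Im (unstretch u))"
    by (rule smooth_real_on_cong) (simp add: unstretch_def cmod_power2)
qed

lemma smooth_real_on_arctan_diamond:
  "smooth_real_on UNIV (\<lambda>u. Re (arctan_diamond u))" "smooth_real_on UNIV (\<lambda>u. Im (arctan_diamond u))"
  unfolding arctan_diamond_def by (auto intro!: smooth_real_on_intros)

lemma smooth_real_on_tan_diamond:
  "smooth_real_on diamond (\<lambda>w. Re (tan_diamond w))" "smooth_real_on diamond (\<lambda>w. Im (tan_diamond w))"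
proof -
  have "cos x \<noteq> 0" if "\<bar>x\<bar> < pi/2" for x
  proof -
    have "- (pi/2) < x" "x < pi/2" using that by (simp_all add: abs_less_iff)
    then show ?thesis using cos_gt_zero_pi[of x] by simp
  qed
  then have "cos (pi * (Re w + Im w) / 2) \<noteq> 0" "cos (pi * (Re w - Im w) / 2) \<noteq> 0" if "w \<in> diamond" for w
    using diamond_arctan_bounds[OF that] by blast+
  then show "smooth_real_on diamond (\<lambda>w. Re (tan_diamond w))" "smooth_real_on diamond (\<lambda>w. Im (tan_diamond w))"
    unfolding tan_diamond_def by (auto intro!: smooth_real_on_intros)
qed

lemma open_diamond: "open diamond"
  unfolding diamond_def by (intro open_Collect_less continuous_intros)

lemma smooth_on_zmap: "smooth_on (ball 0 1) zmap"
proof (rule smooth_on_if_smooth_real_components)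
  have "smooth_real_on (ball 0 1) (\<lambda>z. h (zmap z))"
    if "smooth_real_on UNIV (\<lambda>u. h (arctan_diamond u))" for h
    using smooth_real_on_compose[OF that smooth_real_on_stretch]
    by (rule smooth_real_on_cong) (auto simp: zmap_eq_arctan_diamond_stretch)
  then show "smooth_real_on (ball 0 1) (\<lambda>z. Re (zmap z))" "smooth_real_on (ball 0 1) (\<lambda>z. Im (zmap z))"
    using smooth_real_on_arctan_diamond by blast+
qed simp

lemma smooth_on_inv_zmap: "smooth_on diamond (inv_into (ball 0 1) zmap)"
proof (rule smooth_on_if_smooth_real_components[OF open_diamond])
  have "smooth_real_on diamond (\<lambda>w. h (inv_into (ball 0 1) zmap w))"
    if "smooth_real_on UNIV (\<lambda>u. h (unstretch u))" for h
    using smooth_real_on_compose[OF that smooth_real_on_tan_diamond]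
    by (rule smooth_real_on_cong) (auto simp: inv_into_zmap)
  then show "smooth_real_on diamond (\<lambda>w. Re (inv_into (ball 0 1) zmap w))"
    "smooth_real_on diamond (\<lambda>w. Im (inv_into (ball 0 1) zmap w))"
    using smooth_real_on_unstretch by blast+
qed

theorem mainTheorem9:
  shows "orientation_preserving_diffeo zmap (ball 0 1) diamond"
proof -
  have "\<forall>z\<in>ball 0 1. jac_det (frechet_derivative zmap (at z)) > 0"
    using jac_det_zmap_pos by simp
  then show ?thesis
    unfolding orientation_preserving_diffeo_def
    using bij_betw_zmap smooth_on_zmap smooth_on_inv_zmap by blast
qed

end
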